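(* For every $n\ge0$, the row sequence $\big(C_{n,k}^{(3)}\big)_{0\le k\le 3n}$ of the three-Catalan triangle is log-concave, where $C_{n,k}^{(3)}=\binom{2n}{3n+k}_3-\binom{2n}{3n+k+1}_3$.
   Context: The quadrinomial coefficients $\binom{n}{k}_3$ are defined by $(1+x+x^2+x^3)^n=\sum_{k\in\mathbb Z}\binom{n}{k}_3x^k$, with $\binom{n}{k}_3=0$ for $k<0$ or $k>3n$. A sequence of nonnegative numbers $(a_k)_{0\le k\le m}$ is log-concave if $a_{k-1}a_{k+1}\le a_k^2$ for all $0<k<m$. *)

theory Defs
  imports "HOL-Computational_Algebra.Polynomial"
begin

definition quadrinomial :: "nat \<Rightarrow> int \<Rightarrow> int" where
  "quadrinomial n k = (if k < 0 then 0 else coeff ([:1, 1, 1, 1:] ^ n) (nat k))"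

definition three_catalan :: "nat \<Rightarrow> int \<Rightarrow> int" where
  "three_catalan n k = quadrinomial (2 * n) (3 * int n + k) - quadrinomial (2 * n) (3 * int n + k + 1)"

definition log_concave :: "(nat \<Rightarrow> int) \<Rightarrow> nat \<Rightarrow> bool" where
  "log_concave a m \<longleftrightarrow> (\<forall>k\<le>m. 0 \<le> a k) \<and>
     (\<forall>k. 0 < k \<and> k < m \<longrightarrow> a (k - 1) * a (k + 1) \<le> (a k)^2)"

end

theory Submission
  imports Defs
begin

text \<open>
  Two steps of the recursion of quadrinomial coefficients give
  C(n+1, k) = \<Sum>t. w(t) C(n, k + t), where w = (1,2,3,4,3,2,1) are the coefficients of
  (1+x+x^2+x^3)^2; the symmetry of the quadrinomial row makes C(n, -1-k) = -C(n, k),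
  so the terms with negative index fold back onto the row.  The induction carries the
  PF2 property x(i-1) x(j+1) \<le> x(i) x(j) for all i \<le> j, which a log-concave sequence
  that is positive on an interval and zero outside it enjoys.  The log-concavity defect
  C(n+1,k)^2 - C(n+1,k-1) C(n+1,k+1) is then an explicit combination, with nonnegative
  integer coefficients, of the PF2 gaps x(i) x(j) - x(i-1) x(j+1) of row n.
\<close>

lemma quadrinomial_Suc:
  "quadrinomial (Suc m) k =
     quadrinomial m k + quadrinomial m (k - 1) + quadrinomial m (k - 2) + quadrinomial m (k - 3)"
proof -
  have "coeff ([:1, 1, 1, 1:] * p) j = coeff p j + (if 1 \<le> j then coeff p (j - 1) else 0)
     + (if 2 \<le> j then coeff p (j - 2) else 0) + (if 3 \<le> j then coeff p (j - 3) else 0)"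
    for p :: "int poly" and j
    by (cases j; cases "j - 1"; cases "j - 2") (simp_all add: coeff_pCons')
  then show ?thesis
    by (cases "k < 0") (auto simp: quadrinomial_def nat_diff_distrib')
qed

lemma quadrinomial_Suc_Suc:
  "quadrinomial (Suc (Suc m)) k =
     quadrinomial m k + 2 * quadrinomial m (k - 1) + 3 * quadrinomial m (k - 2)
     + 4 * quadrinomial m (k - 3) + 3 * quadrinomial m (k - 4) + 2 * quadrinomial m (k - 5)
     + quadrinomial m (k - 6)"
  by (simp add: quadrinomial_Suc diff_diff_eq)

lemma degree_quad_power: "degree ([:1, 1, 1, 1:] ^ m :: int poly) = 3 * m"
  by (simp add: degree_power_eq)

lemma quadrinomial_eq_0_below: "k < 0 \<Longrightarrow> quadrinomial m k = 0"
  by (simp add: quadrinomial_def)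

lemma quadrinomial_eq_0_above: "3 * int m < k \<Longrightarrow> quadrinomial m k = 0"
  unfolding quadrinomial_def using degree_quad_power[of m] by (auto intro!: coeff_eq_0)

lemma quadrinomial_symmetric: "quadrinomial m (3 * int m - k) = quadrinomial m k"
proof (cases "0 \<le> k \<and> k \<le> 3 * int m")
  case True
  then obtain j where j: "k = int j" "j \<le> 3 * m"
    by (metis nonneg_int_cases of_nat_le_iff of_nat_mult of_nat_numeral)
  have "reflect_poly ([:1, 1, 1, 1:] ^ m) = ([:1, 1, 1, 1:] ^ m :: int poly)"
    by (simp add: reflect_poly_power reflect_poly_pCons)
  then have "coeff ([:1, 1, 1, 1:] ^ m :: int poly) (3 * m - j) = coeff ([:1, 1, 1, 1:] ^ m) j"
    using j(2) coeff_reflect_poly[of "[:1, 1, 1, 1:] ^ m :: int poly" j]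
    by (simp add: degree_quad_power)
  moreover have "nat (3 * int m) = 3 * m" by simp
  ultimately show ?thesis using j by (simp add: quadrinomial_def nat_diff_distrib')
qed (auto simp: quadrinomial_eq_0_below quadrinomial_eq_0_above)

lemma three_catalan_Suc:
  "three_catalan (Suc n) k =
     three_catalan n (k + 3) + 2 * three_catalan n (k + 2) + 3 * three_catalan n (k + 1)
     + 4 * three_catalan n k + 3 * three_catalan n (k - 1) + 2 * three_catalan n (k - 2)
     + three_catalan n (k - 3)"
proof -
  have "2 * Suc n = Suc (Suc (2 * n))" by simp
  then show ?thesis
    unfolding three_catalan_def by (simp only: quadrinomial_Suc_Suc) (simp add: algebra_simps)
qed

lemma three_catalan_reflect: "three_catalan n (-1 - k) = - three_catalan n k"
  using quadrinomial_symmetric[of "2 * n" "3 * int n + k"]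
    quadrinomial_symmetric[of "2 * n" "3 * int n + k + 1"]
  by (simp add: three_catalan_def algebra_simps)

lemma three_catalan_eq_0_above: "3 * int n < k \<Longrightarrow> three_catalan n k = 0"
  by (simp add: three_catalan_def quadrinomial_eq_0_above)

definition catalan_row :: "nat \<Rightarrow> int \<Rightarrow> int" where
  "catalan_row n k = (if k < 0 then 0 else three_catalan n k)"

lemma catalan_row_eq_0: "k < 0 \<or> 3 * int n < k \<Longrightarrow> catalan_row n k = 0"
  by (auto simp: catalan_row_def three_catalan_eq_0_above)

lemma three_catalan_eq_catalan_row_diff:
  "three_catalan n k = catalan_row n k - catalan_row n (-1 - k)"
  using three_catalan_reflect[of n "-1 - k"] by (simp add: catalan_row_def)

definition conv_quad2 :: "(int \<Rightarrow> 'a::semiring_1) \<Rightarrow> int \<Rightarrow> 'a" where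
  "conv_quad2 x k = x (k - 3) + 2 * x (k - 2) + 3 * x (k - 1) + 4 * x k
     + 3 * x (k + 1) + 2 * x (k + 2) + x (k + 3)"

text \<open>For x vanishing on negative indices, k \<mapsto> x k - x (-1 - k) is its antisymmetric
  extension about -1/2, and fold_conv_quad2 x is the convolution of that extension with w.\<close>

definition fold_conv_quad2 :: "(int \<Rightarrow> 'a::ring_1) \<Rightarrow> int \<Rightarrow> 'a" where
  "fold_conv_quad2 x k = conv_quad2 x k - conv_quad2 x (-1 - k)"

lemma three_catalan_Suc_eq_fold_conv:
  "three_catalan (Suc n) k = fold_conv_quad2 (catalan_row n) k"
  unfolding three_catalan_Suc three_catalan_eq_catalan_row_diff[of n] fold_conv_quad2_def conv_quad2_def
  by (simp add: algebra_simps)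

definition pf2_seq :: "(int \<Rightarrow> 'a::linordered_idom) \<Rightarrow> bool" where
  "pf2_seq x \<longleftrightarrow> (\<forall>i j. i \<le> j \<longrightarrow> x (i - 1) * x (j + 1) \<le> x i * x j)"

definition pf2_gap :: "(int \<Rightarrow> 'a::ring) \<Rightarrow> int \<Rightarrow> int \<Rightarrow> 'a" where
  "pf2_gap x i j = x i * x j - x (i - 1) * x (j + 1)"

lemma pf2_gap_nonneg: "pf2_seq x \<Longrightarrow> i \<le> j \<Longrightarrow> 0 \<le> pf2_gap x i j"
  by (simp add: pf2_seq_def pf2_gap_def)

lemma pf2_seq_imp_log_concave: "pf2_seq x \<Longrightarrow> x (t - 1) * x (t + 1) \<le> (x t)^2"
  by (simp add: pf2_seq_def power2_eq_square)

lemma pf2_seq_shift: "pf2_seq x \<Longrightarrow> pf2_seq (\<lambda>t. x (t + c))"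
  unfolding pf2_seq_def by (metis add.commute add.left_commute add_diff_eq add_le_cancel_right)

lemma pf2_seqI_log_concave:
  fixes x :: "int \<Rightarrow> 'a::linordered_idom"
  assumes outside: "\<And>t. t < a \<or> b < t \<Longrightarrow> x t = 0"
    and inside: "\<And>t. a \<le> t \<Longrightarrow> t \<le> b \<Longrightarrow> 0 < x t"
    and lc: "\<And>t. x (t - 1) * x (t + 1) \<le> (x t)^2"
  shows "pf2_seq x"
  unfolding pf2_seq_def
proof (intro allI impI)
  fix i j :: int
  assume "i \<le> j"
  have nonneg: "0 \<le> x t" for t
    using outside inside by (metis le_less_linear order.refl less_imp_le)
  show "x (i - 1) * x (j + 1) \<le> x i * x j"
  proof (cases "a \<le> i - 1 \<and> j + 1 \<le> b")
    case False
    then have "x (i - 1) * x (j + 1) = 0" using outside by auto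
    then show ?thesis by (metis nonneg mult_nonneg_nonneg)
  next
    case True
    have "j + 1 \<le> b \<longrightarrow> x (i - 1) * x (j + 1) \<le> x i * x j" using \<open>i \<le> j\<close>
    proof (induction j rule: int_ge_induct)
      case base
      show ?case using lc[of i] by (simp add: power2_eq_square)
    next
      case (step j)
      show ?case
      proof
        assume "j + 1 + 1 \<le> b"
        then have pos: "0 < x j" "0 < x (j + 1)" using True step.hyps inside by auto
        have IH: "x (i - 1) * x (j + 1) \<le> x i * x j" using step.IH \<open>j + 1 + 1 \<le> b\<close> by simp
        have "x j * x (j + 2) \<le> (x (j + 1))^2" using lc[of "j + 1"] by (simp add: add.assoc)
        with IH have "x (i - 1) * x (j + 1) * (x j * x (j + 2)) \<le> x i * x j * (x (j + 1))^2"
          by (rule mult_mono) (simp_all add: nonneg)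
        then have "(x (i - 1) * x (j + 2)) * (x j * x (j + 1)) \<le> (x i * x (j + 1)) * (x j * x (j + 1))"
          by (simp add: power2_eq_square algebra_simps)
        then show "x (i - 1) * x (j + 1 + 1) \<le> x i * x (j + 1)"
          using pos by (simp add: mult_le_cancel_right_pos add.assoc)
      qed
    qed
    then show ?thesis using True by blast
  qed
qed

lemma conv_quad2_log_concave:
  fixes x :: "int \<Rightarrow> 'a::linordered_idom"
  assumes "pf2_seq x"
  shows "conv_quad2 x (k - 1) * conv_quad2 x (k + 1) \<le> (conv_quad2 x k)^2"
proof -
  define y where "y t = x (t + (k - 4))" for t
  have "pf2_seq y" using pf2_seq_shift[OF assms] by (simp add: y_def[abs_def])
  have "(conv_quad2 y 4)^2 - conv_quad2 y 3 * conv_quad2 y 5 =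
      pf2_gap y 1 1 + 2 * pf2_gap y 1 2 + 3 * pf2_gap y 1 3 + 4 * pf2_gap y 1 4
    + 3 * pf2_gap y 1 5 + 2 * pf2_gap y 1 6 + pf2_gap y 1 7 + pf2_gap y 2 2 + 2 * pf2_gap y 2 3
    + 5 * pf2_gap y 2 4 + 4 * pf2_gap y 2 5 + 3 * pf2_gap y 2 6 + 2 * pf2_gap y 2 7
    + pf2_gap y 3 3 + 6 * pf2_gap y 3 4 + 5 * pf2_gap y 3 5 + 4 * pf2_gap y 3 6
    + 3 * pf2_gap y 3 7 + 7 * pf2_gap y 4 4 + 6 * pf2_gap y 4 5 + 5 * pf2_gap y 4 6
    + 4 * pf2_gap y 4 7 + pf2_gap y 5 5 + 2 * pf2_gap y 5 6 + 3 * pf2_gap y 5 7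
    + pf2_gap y 6 6 + 2 * pf2_gap y 6 7 + pf2_gap y 7 7" (is "_ = ?S")
    by (simp add: conv_quad2_def pf2_gap_def power2_eq_square algebra_simps)
  moreover have "0 \<le> ?S"
    by (intro add_nonneg_nonneg mult_nonneg_nonneg) (simp_all add: pf2_gap_nonneg[OF \<open>pf2_seq y\<close>])
  moreover have "conv_quad2 y 3 = conv_quad2 x (k - 1)" "conv_quad2 y 4 = conv_quad2 x k"
    "conv_quad2 y 5 = conv_quad2 x (k + 1)"
    by (simp_all add: conv_quad2_def y_def algebra_simps)
  ultimately show ?thesis by simp
qed

lemma fold_conv_quad2_eq_conv:
  "(\<And>t. t < 0 \<Longrightarrow> x t = 0) \<Longrightarrow> 3 \<le> k \<Longrightarrow> fold_conv_quad2 x k = conv_quad2 x k"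
  by (simp add: fold_conv_quad2_def conv_quad2_def)

lemma fold_conv_quad2_log_concave:
  fixes x :: "int \<Rightarrow> 'a::linordered_idom"
  assumes pf2: "pf2_seq x" and neg: "\<And>t. t < 0 \<Longrightarrow> x t = 0" and "0 < k"
  shows "fold_conv_quad2 x (k - 1) * fold_conv_quad2 x (k + 1) \<le> (fold_conv_quad2 x k)^2"
proof -
  let ?F = "fold_conv_quad2 x"
  \<comment> \<open>Because x (-1) = 0, the gaps pf2_gap x 0 j are just the products x 0 * x j.\<close>
  note gaps = pf2_gap_nonneg[OF pf2]
  note unfold = fold_conv_quad2_def conv_quad2_def pf2_gap_def neg power2_eq_square algebra_simps
  consider "k = 1" | "k = 2" | "k = 3" | "4 \<le> k" using \<open>0 < k\<close> by linarith
  then show ?thesis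
  proof cases
    case 1
    have "(?F 1)^2 - ?F 0 * ?F 2 =
        2 * pf2_gap x 0 1 + 7 * pf2_gap x 0 2 + 11 * pf2_gap x 0 3 + 11 * pf2_gap x 0 4
      + 8 * pf2_gap x 0 5 + 4 * pf2_gap x 0 6 + pf2_gap x 0 7 + 6 * pf2_gap x 1 1
      + 11 * pf2_gap x 1 2 + 11 * pf2_gap x 1 3 + 9 * pf2_gap x 1 4 + 4 * pf2_gap x 1 5
      + pf2_gap x 1 6 + 5 * pf2_gap x 2 2 + 5 * pf2_gap x 2 3 + 5 * pf2_gap x 2 4
      + pf2_gap x 2 5 + pf2_gap x 3 3 + 2 * pf2_gap x 3 4 + pf2_gap x 4 4" (is "_ = ?S")
      by (simp add: unfold)
    moreover have "0 \<le> ?S" by (intro add_nonneg_nonneg mult_nonneg_nonneg) (simp_all add: gaps)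
    ultimately show ?thesis using 1 by simp
  next
    case 2
    have "(?F 2)^2 - ?F 1 * ?F 3 =
        pf2_gap x 0 1 + 5 * pf2_gap x 0 2 + 9 * pf2_gap x 0 3 + 9 * pf2_gap x 0 4
      + 7 * pf2_gap x 0 5 + 4 * pf2_gap x 0 6 + pf2_gap x 0 7 + 3 * pf2_gap x 1 1
      + 9 * pf2_gap x 1 2 + 9 * pf2_gap x 1 3 + 7 * pf2_gap x 1 4 + 5 * pf2_gap x 1 5
      + pf2_gap x 1 6 + 7 * pf2_gap x 2 2 + 6 * pf2_gap x 2 3 + 5 * pf2_gap x 2 4
      + 4 * pf2_gap x 2 5 + pf2_gap x 3 3 + 2 * pf2_gap x 3 4 + 3 * pf2_gap x 3 5
      + pf2_gap x 4 4 + 2 * pf2_gap x 4 5 + pf2_gap x 5 5" (is "_ = ?S")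
      by (simp add: unfold)
    moreover have "0 \<le> ?S" by (intro add_nonneg_nonneg mult_nonneg_nonneg) (simp_all add: gaps)
    ultimately show ?thesis using 2 by simp
  next
    case 3
    have "(?F 3)^2 - ?F 2 * ?F 4 =
        pf2_gap x 0 0 + 3 * pf2_gap x 0 1 + 5 * pf2_gap x 0 2 + 7 * pf2_gap x 0 3
      + 7 * pf2_gap x 0 4 + 5 * pf2_gap x 0 5 + 3 * pf2_gap x 0 6 + pf2_gap x 0 7
      + pf2_gap x 1 1 + 2 * pf2_gap x 1 2 + 5 * pf2_gap x 1 3 + 4 * pf2_gap x 1 4
      + 3 * pf2_gap x 1 5 + 2 * pf2_gap x 1 6 + pf2_gap x 2 2 + 6 * pf2_gap x 2 3
      + 5 * pf2_gap x 2 4 + 4 * pf2_gap x 2 5 + 3 * pf2_gap x 2 6 + 7 * pf2_gap x 3 3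
      + 6 * pf2_gap x 3 4 + 5 * pf2_gap x 3 5 + 4 * pf2_gap x 3 6 + pf2_gap x 4 4
      + 2 * pf2_gap x 4 5 + 3 * pf2_gap x 4 6 + pf2_gap x 5 5 + 2 * pf2_gap x 5 6
      + pf2_gap x 6 6" (is "_ = ?S")
      by (simp add: unfold)
    moreover have "0 \<le> ?S" by (intro add_nonneg_nonneg mult_nonneg_nonneg) (simp_all add: gaps)
    ultimately show ?thesis using 3 by simp
  next
    case 4
    then show ?thesis
      using conv_quad2_log_concave[OF pf2, of k] by (simp add: fold_conv_quad2_eq_conv neg)
  qed
qed

lemma fold_conv_quad2_pos:
  fixes x :: "int \<Rightarrow> 'a::linordered_idom"
  assumes nonneg: "\<And>t. 0 \<le> x t" and neg: "\<And>t. t < 0 \<Longrightarrow> x t = 0"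
    and "0 \<le> k" and pos: "0 < x (max 0 (k - 3))"
  shows "0 < fold_conv_quad2 x k"
proof -
  consider "k = 0" | "k = 1" | "k = 2" | "3 \<le> k" using \<open>0 \<le> k\<close> by linarith
  then show ?thesis
  proof cases
    case 4
    then show ?thesis
      using pos nonneg[of "k - 2"] nonneg[of "k - 1"] nonneg[of k] nonneg[of "k + 1"]
        nonneg[of "k + 2"] nonneg[of "k + 3"]
      by (simp add: fold_conv_quad2_eq_conv neg conv_quad2_def max_def)
  qed (use pos nonneg[of 1] nonneg[of 2] nonneg[of 3] nonneg[of 4] nonneg[of 5] in
        \<open>simp_all add: fold_conv_quad2_def conv_quad2_def neg\<close>)
qed

lemma catalan_row_0: "catalan_row 0 k = (if k = 0 then 1 else 0)"
  by (simp add: catalan_row_def three_catalan_def quadrinomial_def)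

lemma catalan_row_Suc: "0 \<le> k \<Longrightarrow> catalan_row (Suc n) k = fold_conv_quad2 (catalan_row n) k"
  by (simp add: catalan_row_def three_catalan_Suc_eq_fold_conv)

lemma catalan_row_pos_Suc:
  assumes pos: "\<And>k. 0 \<le> k \<Longrightarrow> k \<le> 3 * int n \<Longrightarrow> 0 < catalan_row n k"
    and "0 \<le> k" "k \<le> 3 * int (Suc n)"
  shows "0 < catalan_row (Suc n) k"
proof -
  have "0 \<le> catalan_row n t" for t
    by (cases "0 \<le> t \<and> t \<le> 3 * int n") (auto simp: catalan_row_eq_0 intro: less_imp_le pos)
  moreover have "0 < catalan_row n (max 0 (k - 3))" using assms by (intro pos) auto
  ultimately show ?thesis using \<open>0 \<le> k\<close>
    by (simp add: catalan_row_Suc fold_conv_quad2_pos catalan_row_eq_0)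
qed

lemma catalan_row_log_concave_Suc:
  assumes "pf2_seq (catalan_row n)"
  shows "catalan_row (Suc n) (t - 1) * catalan_row (Suc n) (t + 1) \<le> (catalan_row (Suc n) t)^2"
proof (cases "0 < t")
  case True
  then show ?thesis
    using fold_conv_quad2_log_concave[OF assms, of t] by (simp add: catalan_row_Suc catalan_row_eq_0)
qed (simp add: catalan_row_eq_0)

lemma catalan_row_pf2_pos:
  "pf2_seq (catalan_row n) \<and> (\<forall>k. 0 \<le> k \<and> k \<le> 3 * int n \<longrightarrow> 0 < catalan_row n k)"
proof (induction n)
  case 0
  have "pf2_seq (catalan_row 0)"
  proof (rule pf2_seqI_log_concave[where a = 0 and b = 0])
    show "catalan_row 0 (t - 1) * catalan_row 0 (t + 1) \<le> (catalan_row 0 t)^2" for t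
      by (simp add: catalan_row_0)
  qed (auto simp: catalan_row_0)
  moreover have "0 < catalan_row 0 k" if "0 \<le> k" "k \<le> 3 * int 0" for k
    using that by (simp add: catalan_row_0)
  ultimately show ?case by blast
next
  case (Suc n)
  then have pos: "\<forall>k. 0 \<le> k \<and> k \<le> 3 * int (Suc n) \<longrightarrow> 0 < catalan_row (Suc n) k"
    using catalan_row_pos_Suc by blast
  have "pf2_seq (catalan_row (Suc n))"
    using Suc catalan_row_log_concave_Suc pos
    by (intro pf2_seqI_log_concave[where a = 0 and b = "3 * int (Suc n)"]) (simp_all add: catalan_row_eq_0)
  with pos show ?case by blast
qed

theorem proposition4p2:
  fixes n :: nat
  shows "log_concave (\<lambda>k. three_catalan n (int k)) (3 * n)"
proof -
  have row: "three_catalan n (int k) = catalan_row n (int k)" for k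
    by (simp add: catalan_row_def)
  from catalan_row_pf2_pos[of n] have pf2: "pf2_seq (catalan_row n)"
    and pos: "\<And>k. 0 \<le> k \<Longrightarrow> k \<le> 3 * int n \<Longrightarrow> 0 < catalan_row n k" by auto
  show ?thesis
    unfolding log_concave_def row
  proof (intro conjI allI impI)
    show "0 \<le> catalan_row n (int k)" if "k \<le> 3 * n" for k
      using pos[of "int k"] that by simp
    show "catalan_row n (int (k - 1)) * catalan_row n (int (k + 1)) \<le> (catalan_row n (int k))^2"
      if "0 < k \<and> k < 3 * n" for k
      using pf2_seq_imp_log_concave[OF pf2, of "int k"] that by (simp add: add.commute)
  qed
qed

end
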